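(* Let $N\ge 2$ and $0<\gamma_1\le\dots\le\gamma_N$, and let $S$ be the star centered at vertex $1$. Then for every spanning tree $T'$ on $\{1,\dots,N\}$, $$R_{\mathrm s}(S)-R_{\mathrm s}(T')\le \frac{1}{2}\log_2\!\Big(\Big(\frac{\gamma_N(1+2\gamma_1)}{\gamma_1(1+2\gamma_N)}\Big)^{N}\Big),$$ and consequently $\sup_{T'}\big(R_{\mathrm s}(S)-R_{\mathrm s}(T')\big)\to 0$ as $\gamma_1\to\infty$ (with $N$ fixed and $\gamma_1\le\dots\le\gamma_N$).
   Context: For distinct $i,j$ put $\varphi(i,j)=\log_2\!\big(\gamma_i+\frac{\gamma_i}{\gamma_i+\gamma_j}\big)$. For a spanning tree $T$ on $\{1,\dots,N\}$ with neighbor sets $A_i^T$, define $R_{\mathrm s}(T)=\frac{1}{2(N-1)}\sum_{i=1}^N \min_{j\in A_i^T}\varphi(i,j)$. *)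

theory Defs
  imports Complex_Main
begin

definition tree_edges_on :: "nat \<Rightarrow> nat set set" where
  "tree_edges_on N = {{i, j} | i j. i \<in> {1..N} \<and> j \<in> {1..N} \<and> i \<noteq> j}"

definition edge_rel :: "nat set set \<Rightarrow> (nat \<times> nat) set" where
  "edge_rel T = {(i, j). {i, j} \<in> T}"

definition is_spanning_tree :: "nat \<Rightarrow> nat set set \<Rightarrow> bool" where
  "is_spanning_tree N T \<longleftrightarrow>
     T \<subseteq> tree_edges_on N \<and> card T = N - 1 \<and>
     (\<forall>i\<in>{1..N}. \<forall>j\<in>{1..N}. (i, j) \<in> (edge_rel T)\<^sup>*)"

definition nbrs :: "nat set set \<Rightarrow> nat \<Rightarrow> nat set" where
  "nbrs T i = {j. {i, j} \<in> T \<and> j \<noteq> i}"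

definition phi :: "(nat \<Rightarrow> real) \<Rightarrow> nat \<Rightarrow> nat \<Rightarrow> real" where
  "phi \<gamma> i j = log 2 (\<gamma> i + \<gamma> i / (\<gamma> i + \<gamma> j))"

definition Rs :: "nat \<Rightarrow> (nat \<Rightarrow> real) \<Rightarrow> nat set set \<Rightarrow> real" where
  "Rs N \<gamma> T = 1 / (2 * (real N - 1)) * (\<Sum>i = 1..N. Min (phi \<gamma> i ` nbrs T i))"

definition star :: "nat \<Rightarrow> nat set set" where
  "star N = {{1, j} | j. j \<in> {2..N}}"

end

theory Submission
  imports Defs
begin

text \<open>
  Every vertex of a spanning tree has a neighbour, and every neighbour j of i satisfies
  \<open>\<gamma>\<^sub>1 \<le> \<gamma>\<^sub>j \<le> \<gamma>\<^sub>N\<close>. Since \<open>\<phi>(i,j)\<close> decreases in \<open>\<gamma>\<^sub>j\<close>, the minimum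
  over the neighbours of i in any two spanning trees differs by at most
  \<open>log\<^sub>2\<close> of the ratio of \<open>\<phi>\<close> at \<open>\<gamma>\<^sub>j = \<gamma>\<^sub>1\<close> and at \<open>\<gamma>\<^sub>j = \<gamma>\<^sub>N\<close>, and this ratio
  is at most \<open>r = \<gamma>\<^sub>N(1+2\<gamma>\<^sub>1) / (\<gamma>\<^sub>1(1+2\<gamma>\<^sub>N))\<close>. Summing over the N vertices and
  using \<open>1/(2(N-1)) \<le> 1/2\<close> gives the bound. Finally \<open>r \<le> 1 + 1/(2\<gamma>\<^sub>1)\<close>, so the
  bound is \<open>O(N/\<gamma>\<^sub>1)\<close>, and the supremum is squeezed between 0 (take T' to be the
  star itself) and this bound.
\<close>

lemma monotone_interval_le:
  fixes \<gamma> :: "nat \<Rightarrow> real"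
  assumes mono: "\<forall>i\<in>{1..<N}. \<gamma> i \<le> \<gamma> (Suc i)" and "1 \<le> i" "i \<le> j" "j \<le> N"
  shows "\<gamma> i \<le> \<gamma> j"
  using assms(3-4)
proof (induction j rule: dec_induct)
  case (step k)
  then have "\<gamma> i \<le> \<gamma> k" by simp
  also have "\<gamma> k \<le> \<gamma> (Suc k)" using mono step.hyps \<open>1 \<le> i\<close> step.prems by auto
  finally show ?case .
qed simp

lemma monotone_interval_bounds:
  fixes \<gamma> :: "nat \<Rightarrow> real"
  assumes "\<forall>i\<in>{1..<N}. \<gamma> i \<le> \<gamma> (Suc i)" and "j \<in> {1..N}"
  shows "\<gamma> 1 \<le> \<gamma> j" "\<gamma> j \<le> \<gamma> N"
  using monotone_interval_le[OF assms(1)] assms(2) by auto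

lemma phi_bounds:
  fixes \<gamma> :: "nat \<Rightarrow> real"
  assumes "0 < \<gamma> i" "0 < lo" "lo \<le> \<gamma> j" "\<gamma> j \<le> hi"
  shows "log 2 (\<gamma> i + \<gamma> i / (\<gamma> i + hi)) \<le> phi \<gamma> i j"
    and "phi \<gamma> i j \<le> log 2 (\<gamma> i + \<gamma> i / (\<gamma> i + lo))"
  using assms unfolding phi_def
  by (subst log_le_cancel_iff; auto intro!: add_pos_nonneg divide_left_mono mult_pos_pos)+

text \<open>Both sides factor as products of values of the decreasing map \<open>x \<mapsto> (x+1)/x\<close>
  at \<open>\<gamma>\<^sub>i + \<gamma>\<^sub>1 \<ge> 2\<gamma>\<^sub>1\<close> and of its reciprocal at \<open>\<gamma>\<^sub>i + \<gamma>\<^sub>N \<le> 2\<gamma>\<^sub>N\<close>.\<close>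
lemma phi_extreme_ratio_le:
  fixes a x b :: real
  assumes "0 < a" "a \<le> x" "x \<le> b"
  shows "(x + x / (x + a)) / (x + x / (x + b)) \<le> (b * (1 + 2 * a)) / (a * (1 + 2 * b))"
proof -
  have "x + x / (x + c) = x * ((x + c + 1) / (x + c))" if "0 < c" for c
    using assms that by (simp add: field_simps)
  then have "(x + x / (x + a)) / (x + x / (x + b)) = ((x + a + 1) / (x + a)) * ((x + b) / (x + b + 1))"
    using assms by simp
  also have "\<dots> \<le> ((2 * a + 1) / (2 * a)) * ((2 * b) / (2 * b + 1))"
  proof (rule mult_mono)
    show "(x + a + 1) / (x + a) \<le> (2 * a + 1) / (2 * a)"
      and "(x + b) / (x + b + 1) \<le> (2 * b) / (2 * b + 1)"
      using assms by (simp_all add: field_simps)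
  qed (use assms in auto)
  also have "\<dots> = (b * (1 + 2 * a)) / (a * (1 + 2 * b))"
    using assms by (simp add: divide_simps) (simp add: algebra_simps)
  finally show ?thesis .
qed

lemma extreme_ratio_bounds:
  fixes a b :: real
  assumes "0 < a" "a \<le> b"
  shows "1 \<le> (b * (1 + 2 * a)) / (a * (1 + 2 * b))"
    and "(b * (1 + 2 * a)) / (a * (1 + 2 * b)) \<le> 1 + 1 / (2 * a)"
  using assms by (simp_all add: divide_simps) (simp_all add: algebra_simps)

lemma nbrs_subset:
  assumes "is_spanning_tree N T"
  shows "nbrs T i \<subseteq> {1..N}"
  using assms unfolding is_spanning_tree_def nbrs_def tree_edges_on_def
  by (auto simp: doubleton_eq_iff)

lemma finite_nbrs:
  assumes "is_spanning_tree N T"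
  shows "finite (nbrs T i)"
  using finite_subset[OF nbrs_subset[OF assms]] by simp

lemma nbrs_nonempty:
  assumes T: "is_spanning_tree N T" and "N \<ge> 2" and i: "i \<in> {1..N}"
  shows "nbrs T i \<noteq> {}"
proof -
  obtain j where j: "j \<in> {1..N}" "j \<noteq> i"
  proof (cases "i = 1")
    case True then show ?thesis using that[of 2] \<open>N \<ge> 2\<close> by simp
  next
    case False then show ?thesis using that[of 1] \<open>N \<ge> 2\<close> by simp
  qed
  have "(i, j) \<in> (edge_rel T)\<^sup>*" using T i j unfolding is_spanning_tree_def by auto
  then obtain k where "(i, k) \<in> edge_rel T" using j(2) by (metis converse_rtranclE)
  then have "{i, k} \<in> T" unfolding edge_rel_def by auto
  moreover have "k \<noteq> i"
    using calculation T unfolding is_spanning_tree_def tree_edges_on_def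
    by (auto simp: doubleton_eq_iff)
  ultimately show ?thesis unfolding nbrs_def by auto
qed

lemma is_spanning_tree_star:
  assumes "N \<ge> 2"
  shows "is_spanning_tree N (star N)"
proof -
  have star_eq: "star N = (\<lambda>j. {1, j}) ` {2..N}" unfolding star_def by auto
  have "star N \<subseteq> tree_edges_on N" unfolding star_eq tree_edges_on_def by force
  moreover have "inj_on (\<lambda>j. {1::nat, j}) {2..N}" by (auto simp: inj_on_def doubleton_eq_iff)
  then have "card (star N) = N - 1" unfolding star_eq by (simp add: card_image)
  moreover have "(1, j) \<in> (edge_rel (star N))\<^sup>* \<and> (j, 1) \<in> (edge_rel (star N))\<^sup>*"
    if "j \<in> {1..N}" for j
  proof (cases "j = 1")
    case False
    then have "{1, j} \<in> star N" "{j, 1} \<in> star N"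
      using that unfolding star_def by (auto simp: insert_commute)
    then show ?thesis unfolding edge_rel_def by auto
  qed simp
  then have "\<forall>i\<in>{1..N}. \<forall>j\<in>{1..N}. (i, j) \<in> (edge_rel (star N))\<^sup>*"
    by (meson rtrancl_trans)
  ultimately show ?thesis unfolding is_spanning_tree_def by blast
qed

lemma Min_phi_nbrs_diff_le:
  fixes \<gamma> :: "nat \<Rightarrow> real"
  assumes pos: "0 < \<gamma> 1" and mono: "\<forall>i\<in>{1..<N}. \<gamma> i \<le> \<gamma> (Suc i)"
    and S: "is_spanning_tree N S" and T: "is_spanning_tree N T" and "N \<ge> 2"
    and i: "i \<in> {1..N}"
  shows "Min (phi \<gamma> i ` nbrs S i) - Min (phi \<gamma> i ` nbrs T i)
     \<le> log 2 ((\<gamma> N * (1 + 2 * \<gamma> 1)) / (\<gamma> 1 * (1 + 2 * \<gamma> N)))"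
proof -
  note bounds = monotone_interval_bounds[OF mono]
  have gi: "0 < \<gamma> i" "\<gamma> 1 \<le> \<gamma> i" "\<gamma> i \<le> \<gamma> N" using bounds[OF i] pos by auto
  have nbr: "0 < \<gamma> 1" "\<gamma> 1 \<le> \<gamma> j" "\<gamma> j \<le> \<gamma> N" if "j \<in> nbrs U i" "is_spanning_tree N U" for j U
  proof -
    have "j \<in> {1..N}" using nbrs_subset[OF that(2)] that(1) by blast
    then show "0 < \<gamma> 1" "\<gamma> 1 \<le> \<gamma> j" "\<gamma> j \<le> \<gamma> N" using bounds pos by auto
  qed
  define A where "A = \<gamma> i + \<gamma> i / (\<gamma> i + \<gamma> 1)"
  define B where "B = \<gamma> i + \<gamma> i / (\<gamma> i + \<gamma> N)"
  have AB: "0 < A" "0 < B" unfolding A_def B_def using gi pos by (auto intro!: add_pos_nonneg)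
  obtain j where j: "j \<in> nbrs S i" using nbrs_nonempty[OF S \<open>N \<ge> 2\<close> i] by blast
  have "Min (phi \<gamma> i ` nbrs S i) \<le> phi \<gamma> i j" using finite_nbrs[OF S] j by simp
  also have "\<dots> \<le> log 2 A" unfolding A_def using phi_bounds(2)[OF gi(1) nbr[OF j S]] .
  finally have "Min (phi \<gamma> i ` nbrs S i) \<le> log 2 A" .
  moreover have "log 2 B \<le> Min (phi \<gamma> i ` nbrs T i)"
  proof (rule Min.boundedI)
    fix y assume "y \<in> phi \<gamma> i ` nbrs T i"
    then obtain k where k: "k \<in> nbrs T i" "y = phi \<gamma> i k" by blast
    show "log 2 B \<le> y" unfolding B_def k(2) using phi_bounds(1)[OF gi(1) nbr[OF k(1) T]] .
  qed (use finite_nbrs[OF T] nbrs_nonempty[OF T \<open>N \<ge> 2\<close> i] in simp_all)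
  moreover have "log 2 A - log 2 B = log 2 (A / B)" using AB by (simp add: log_divide)
  moreover have "A / B \<le> (\<gamma> N * (1 + 2 * \<gamma> 1)) / (\<gamma> 1 * (1 + 2 * \<gamma> N))"
    unfolding A_def B_def using phi_extreme_ratio_le[OF pos gi(2,3)] .
  then have "log 2 (A / B) \<le> log 2 ((\<gamma> N * (1 + 2 * \<gamma> 1)) / (\<gamma> 1 * (1 + 2 * \<gamma> N)))"
    using AB by (intro log_mono) simp_all
  ultimately show ?thesis by linarith
qed

lemma Rs_diff_le:
  fixes \<gamma> :: "nat \<Rightarrow> real"
  assumes "N \<ge> 2" and pos: "0 < \<gamma> 1" and mono: "\<forall>i\<in>{1..<N}. \<gamma> i \<le> \<gamma> (Suc i)"
    and S: "is_spanning_tree N S" and T: "is_spanning_tree N T"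
  shows "Rs N \<gamma> S - Rs N \<gamma> T
     \<le> 1 / 2 * log 2 (((\<gamma> N * (1 + 2 * \<gamma> 1)) / (\<gamma> 1 * (1 + 2 * \<gamma> N))) ^ N)"
proof -
  define r where "r = (\<gamma> N * (1 + 2 * \<gamma> 1)) / (\<gamma> 1 * (1 + 2 * \<gamma> N))"
  define c where "c = 1 / (2 * (real N - 1))"
  have "\<gamma> 1 \<le> \<gamma> N" using monotone_interval_bounds[OF mono, of N] \<open>N \<ge> 2\<close> by auto
  then have r: "1 \<le> r" unfolding r_def using extreme_ratio_bounds(1)[OF pos] by blast
  have c: "0 \<le> c" "c \<le> 1 / 2" using \<open>N \<ge> 2\<close> unfolding c_def by (auto simp: field_simps)
  have "Rs N \<gamma> S - Rs N \<gamma> T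
      = c * (\<Sum>i = 1..N. Min (phi \<gamma> i ` nbrs S i) - Min (phi \<gamma> i ` nbrs T i))"
    unfolding Rs_def c_def by (simp add: sum_subtractf right_diff_distrib)
  also have "\<dots> \<le> c * (real N * log 2 r)"
    using sum_bounded_above[of "{1..N}" _ "log 2 r"]
      Min_phi_nbrs_diff_le[OF pos mono S T \<open>N \<ge> 2\<close>] c(1)
    by (auto intro!: mult_left_mono simp: r_def)
  also have "\<dots> \<le> 1 / 2 * (real N * log 2 r)" using c r by (intro mult_right_mono) auto
  also have "\<dots> = 1 / 2 * log 2 (r ^ N)" using r by (simp add: log_nat_power)
  finally show ?thesis unfolding r_def .
qed

lemma log_extreme_ratio_power_le:
  fixes a b :: real
  assumes "0 < a" "a \<le> b"
  shows "1 / 2 * log 2 (((b * (1 + 2 * a)) / (a * (1 + 2 * b))) ^ N) \<le> real N / (4 * a * ln 2)"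
proof -
  define r where "r = (b * (1 + 2 * a)) / (a * (1 + 2 * b))"
  have r: "1 \<le> r" "r \<le> 1 + 1 / (2 * a)"
    unfolding r_def using extreme_ratio_bounds[OF assms] by auto
  have "ln r \<le> ln (1 + 1 / (2 * a))" using r assms by simp
  also have "\<dots> \<le> 1 / (2 * a)" using assms by (intro ln_add_one_self_le_self) simp
  finally have "log 2 r \<le> 1 / (2 * a) / ln 2" unfolding log_def by (rule divide_right_mono) simp
  then have "1 / 2 * real N * log 2 r \<le> 1 / 2 * real N * (1 / (2 * a) / ln 2)"
    by (rule mult_left_mono) simp
  moreover have "log 2 (r ^ N) = real N * log 2 r" using r by (simp add: log_nat_power)
  ultimately show ?thesis unfolding r_def[symmetric] by simp
qed

lemma SUP_Rs_diff_bounds: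
  fixes \<gamma> :: "nat \<Rightarrow> real"
  assumes "N \<ge> 2" and pos: "0 < \<gamma> 1" and mono: "\<forall>i\<in>{1..<N}. \<gamma> i \<le> \<gamma> (Suc i)"
  defines "B \<equiv> 1 / 2 * log 2 (((\<gamma> N * (1 + 2 * \<gamma> 1)) / (\<gamma> 1 * (1 + 2 * \<gamma> N))) ^ N)"
  shows "0 \<le> (SUP T'\<in>{T. is_spanning_tree N T}. Rs N \<gamma> (star N) - Rs N \<gamma> T')"
    and "(SUP T'\<in>{T. is_spanning_tree N T}. Rs N \<gamma> (star N) - Rs N \<gamma> T') \<le> B"
proof -
  have star: "star N \<in> {T. is_spanning_tree N T}" using is_spanning_tree_star \<open>N \<ge> 2\<close> by simp
  have le_B: "Rs N \<gamma> (star N) - Rs N \<gamma> T' \<le> B" if "T' \<in> {T. is_spanning_tree N T}" for T'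
    using Rs_diff_le[OF \<open>N \<ge> 2\<close> pos mono] star that unfolding B_def by simp
  then have "bdd_above ((\<lambda>T'. Rs N \<gamma> (star N) - Rs N \<gamma> T') ` {T. is_spanning_tree N T})"
    by (intro bdd_aboveI2)
  from cSUP_upper[OF star this]
  show "0 \<le> (SUP T'\<in>{T. is_spanning_tree N T}. Rs N \<gamma> (star N) - Rs N \<gamma> T')" by simp
  show "(SUP T'\<in>{T. is_spanning_tree N T}. Rs N \<gamma> (star N) - Rs N \<gamma> T') \<le> B"
    using star le_B by (intro cSUP_least) auto
qed

theorem mainTheorem8:
  fixes N :: nat
  assumes "N \<ge> 2"
  shows "(\<forall>\<gamma> :: nat \<Rightarrow> real. 0 < \<gamma> 1 \<longrightarrow> (\<forall>i\<in>{1..<N}. \<gamma> i \<le> \<gamma> (Suc i)) \<longrightarrow>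
           (\<forall>T'. is_spanning_tree N T' \<longrightarrow>
              Rs N \<gamma> (star N) - Rs N \<gamma> T'
                \<le> 1 / 2 * log 2 (((\<gamma> N * (1 + 2 * \<gamma> 1)) / (\<gamma> 1 * (1 + 2 * \<gamma> N))) ^ N)))
       \<and> (\<forall>\<epsilon>>0. \<exists>M. \<forall>\<gamma> :: nat \<Rightarrow> real. 0 < \<gamma> 1 \<longrightarrow> (\<forall>i\<in>{1..<N}. \<gamma> i \<le> \<gamma> (Suc i)) \<longrightarrow>
           \<gamma> 1 \<ge> M \<longrightarrow>
           \<bar>(SUP T'\<in>{T. is_spanning_tree N T}. Rs N \<gamma> (star N) - Rs N \<gamma> T')\<bar> < \<epsilon>)"
proof (intro conjI allI impI exI)
  fix \<gamma> :: "nat \<Rightarrow> real" and T'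
  assume "0 < \<gamma> 1" "\<forall>i\<in>{1..<N}. \<gamma> i \<le> \<gamma> (Suc i)" "is_spanning_tree N T'"
  then show "Rs N \<gamma> (star N) - Rs N \<gamma> T'
      \<le> 1 / 2 * log 2 (((\<gamma> N * (1 + 2 * \<gamma> 1)) / (\<gamma> 1 * (1 + 2 * \<gamma> N))) ^ N)"
    using Rs_diff_le is_spanning_tree_star assms by blast
next
  fix \<epsilon> :: real and \<gamma> :: "nat \<Rightarrow> real"
  assume "\<epsilon> > 0" and pos: "0 < \<gamma> 1" and mono: "\<forall>i\<in>{1..<N}. \<gamma> i \<le> \<gamma> (Suc i)"
    and large: "\<gamma> 1 \<ge> real N / (\<epsilon> * ln 2) + 1"
  have "\<gamma> 1 \<le> \<gamma> N" using monotone_interval_bounds[OF mono, of N] assms by auto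
  note B_le = log_extreme_ratio_power_le[OF pos this, of N]
  have l2: "0 < \<epsilon> * ln 2" using \<open>\<epsilon> > 0\<close> by simp
  have "real N / (\<epsilon> * ln 2) < \<gamma> 1" using large by linarith
  then have "real N < \<gamma> 1 * (\<epsilon> * ln 2)" using l2 by (simp add: pos_divide_less_eq)
  also have "\<dots> \<le> 4 * (\<gamma> 1 * (\<epsilon> * ln 2))" using pos l2 by simp
  also have "\<dots> = \<epsilon> * (4 * \<gamma> 1 * ln 2)" by (simp add: algebra_simps)
  finally have "real N / (4 * \<gamma> 1 * ln 2) < \<epsilon>" using pos by (simp add: pos_divide_less_eq)
  with SUP_Rs_diff_bounds[OF assms pos mono] B_le
  show "\<bar>(SUP T'\<in>{T. is_spanning_tree N T}. Rs N \<gamma> (star N) - Rs N \<gamma> T')\<bar> < \<epsilon>" by linarith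
qed

end
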